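(* Let $D$ be a strongly connected digraph with at least two vertices and girth $g$. Let $l=\min_{u\in V(D)} \lambda(u)$, where $\lambda(u)$ is the length of a longest directed path in $D$ starting at $u$. Then $\chi_A(D)\le \left\lceil\frac{l+1}{g-1}\right\rceil$.
   Context: Digraphs are finite and loopless; paths and cycles are directed. Girth is the length of a shortest directed cycle. $\chi_A(D)$ is the minimum number of colors in a vertex coloring of $D$ in which every color class induces an acyclic subdigraph. *)

theory Defs
  imports Complex_Main
begin

definition digraph :: "'a set \<Rightarrow> ('a \<times> 'a) set \<Rightarrow> bool" where
  "digraph V A \<longleftrightarrow> finite V \<and> A \<subseteq> V \<times> V \<and> (\<forall>v. (v, v) \<notin> A)"

definition dpath :: "'a set \<Rightarrow> ('a \<times> 'a) set \<Rightarrow> 'a list \<Rightarrow> bool" where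
  "dpath V A p \<longleftrightarrow> p \<noteq> [] \<and> distinct p \<and> set p \<subseteq> V \<and>
     (\<forall>i. Suc i < length p \<longrightarrow> (p ! i, p ! Suc i) \<in> A)"

definition dcycle :: "'a set \<Rightarrow> ('a \<times> 'a) set \<Rightarrow> 'a list \<Rightarrow> bool" where
  "dcycle V A c \<longleftrightarrow> length c \<ge> 2 \<and> dpath V A c \<and> (last c, hd c) \<in> A"

definition strongly_connected :: "'a set \<Rightarrow> ('a \<times> 'a) set \<Rightarrow> bool" where
  "strongly_connected V A \<longleftrightarrow> (\<forall>u\<in>V. \<forall>v\<in>V. (u, v) \<in> A\<^sup>*)"

definition girth :: "'a set \<Rightarrow> ('a \<times> 'a) set \<Rightarrow> nat" where
  "girth V A = (LEAST k. \<exists>c. dcycle V A c \<and> length c = k)"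

definition longest_path_from :: "'a set \<Rightarrow> ('a \<times> 'a) set \<Rightarrow> 'a \<Rightarrow> nat" where
  "longest_path_from V A u = Max {length p - 1 | p. dpath V A p \<and> hd p = u}"

definition acyclic_coloring :: "'a set \<Rightarrow> ('a \<times> 'a) set \<Rightarrow> nat \<Rightarrow> ('a \<Rightarrow> nat) \<Rightarrow> bool" where
  "acyclic_coloring V A k col \<longleftrightarrow> (\<forall>v\<in>V. col v < k) \<and>
     (\<forall>i. \<not> (\<exists>c. dcycle (V \<inter> {v. col v = i}) (A \<inter> ({v. col v = i} \<times> {v. col v = i})) c))"

definition dichromatic_number :: "'a set \<Rightarrow> ('a \<times> 'a) set \<Rightarrow> nat" where
  "dichromatic_number V A = (LEAST k. \<exists>col. acyclic_coloring V A k col)"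

end

theory Submission
  imports Defs
begin

text \<open>Fix a vertex u with \<open>\<lambda>(u) = l\<close> and an acyclic set H of arcs in which every vertex is
  reachable from u and which is maximal: every further arc (x, y) of D closes a cycle, i.e.\ H
  contains a path from y to x. Let h(v) be the length of a longest H-path from u to v; then
  \<open>h(v) \<le> l\<close>, and for every arc (x, y) outside H, appending the H-path from y to x to a longest
  H-path to y gives \<open>h(x) \<ge> h(y) + g - 1\<close>. Colouring v by \<open>h(v) div (g - 1)\<close> therefore makes
  every monochromatic arc an arc of H, so no colour class contains a cycle.\<close>

definition walks :: "('a \<times> 'a) set \<Rightarrow> 'a \<Rightarrow> 'a \<Rightarrow> 'a list set" where
  "walks H a b = {p. p \<noteq> [] \<and> successively (\<lambda>x y. (x, y) \<in> H) p \<and> hd p = a \<and> last p = b}"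

lemma successively_trancl:
  "successively (\<lambda>a b. (a, b) \<in> R) (x # xs) \<Longrightarrow> z \<in> set xs \<Longrightarrow> (x, z) \<in> R\<^sup>+"
proof (induction xs arbitrary: x)
  case (Cons y ys)
  then have "(x, y) \<in> R" and "successively (\<lambda>a b. (a, b) \<in> R) (y # ys)" by auto
  with Cons show ?case by (cases "z = y") (auto intro: trancl_into_trancl2)
qed simp

lemma distinct_if_successively_acyclic:
  assumes "acyclic R" shows "successively (\<lambda>a b. (a, b) \<in> R) p \<Longrightarrow> distinct p"
proof (induction p)
  case (Cons x xs)
  then have "distinct xs" by (auto simp: successively_Cons)
  moreover have "x \<notin> set xs"
    using successively_trancl[OF Cons.prems] assms by (auto simp: acyclic_def)
  ultimately show ?case by simp
qed simp

lemma walks_nonempty_if_rtrancl: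
  assumes "(a, b) \<in> H\<^sup>*" shows "walks H a b \<noteq> {}"
  using assms
proof (induction rule: rtrancl_induct)
  case base
  have "[a] \<in> walks H a a" by (simp add: walks_def)
  then show ?case by blast
next
  case (step b c)
  then obtain p where "p \<in> walks H a b" by blast
  with step.hyps(2) have "p @ [c] \<in> walks H a c"
    by (auto simp: walks_def successively_append_iff)
  then show ?case by blast
qed

lemma walks_append:
  assumes "p \<in> walks H a b" "q \<in> walks H b c"
  shows "p @ tl q \<in> walks H a c"
proof (cases q)
  case (Cons y q')
  with assms show ?thesis
    by (cases q') (auto simp: walks_def successively_append_iff successively_Cons)
qed (use assms in \<open>simp add: walks_def\<close>)

lemma set_walk_subset:
  assumes "H \<subseteq> V \<times> V" "a \<in> V" "p \<in> walks H a b"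
  shows "set p \<subseteq> V"
proof
  fix z assume "z \<in> set p"
  moreover obtain xs where p: "p = a # xs" and "successively (\<lambda>x y. (x, y) \<in> H) p"
    using assms(3) by (cases p) (auto simp: walks_def)
  ultimately have "z = a \<or> (a, z) \<in> H\<^sup>+" using successively_trancl by fastforce
  then show "z \<in> V" using assms(1,2) by (auto dest: tranclD2)
qed

lemma dpath_if_walk:
  assumes "A \<subseteq> V \<times> V" "H \<subseteq> A" "acyclic H" "a \<in> V" "p \<in> walks H a b"
  shows "dpath V A p"
proof -
  have walk: "successively (\<lambda>x y. (x, y) \<in> H) p" and "p \<noteq> []"
    using assms(5) by (auto simp: walks_def)
  moreover have "set p \<subseteq> V" using set_walk_subset[OF _ assms(4,5)] assms(1,2) by blast
  moreover have "distinct p" using distinct_if_successively_acyclic[OF assms(3) walk] .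
  moreover have "\<forall>i. Suc i < length p \<longrightarrow> (p ! i, p ! Suc i) \<in> A"
    using walk assms(2) by (auto simp: successively_conv_nth)
  ultimately show ?thesis by (simp add: dpath_def)
qed

lemma dcycle_if_walk:
  assumes "A \<subseteq> V \<times> V" "H \<subseteq> A" "acyclic H" "(x, y) \<in> A" "x \<noteq> y" "p \<in> walks H y x"
  shows "dcycle V A p"
proof -
  have "y \<in> V" using assms(1,4) by auto
  then have "dpath V A p" using dpath_if_walk[OF assms(1-3) _ assms(6)] by blast
  moreover have "length p \<ge> 2"
    using assms(5,6) by (cases p; cases "tl p") (auto simp: walks_def)
  ultimately show ?thesis using assms(4,6) by (auto simp: dcycle_def walks_def)
qed

subsection \<open>Maximal acyclic sets of arcs\<close>

lemma exists_arc_leaving: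
  assumes "(a, b) \<in> A\<^sup>*" "a \<in> R" "b \<notin> R"
  shows "\<exists>x y. (x, y) \<in> A \<and> x \<in> R \<and> y \<notin> R"
  using assms by (induction rule: rtrancl_induct) auto

lemma rtrancl_restrict_reachable:
  "(u, w) \<in> H\<^sup>* \<Longrightarrow> (u, w) \<in> (H \<inter> (H\<^sup>* `` {u}) \<times> UNIV)\<^sup>*"
  by (induction rule: rtrancl_induct) (auto intro: rtrancl_into_rtrancl)

text \<open>No cycle arises because y, the head of the new arc, has no outgoing arc left.\<close>

lemma acyclic_extension_reaching_more:
  assumes "acyclic H" "(u, x) \<in> H\<^sup>*" "(u, y) \<notin> H\<^sup>*"
  defines "H' \<equiv> insert (x, y) (H \<inter> (H\<^sup>* `` {u}) \<times> UNIV)"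
  shows "acyclic H'" and "insert y (H\<^sup>* `` {u}) \<subseteq> H'\<^sup>* `` {u}"
proof -
  let ?H = "H \<inter> (H\<^sup>* `` {u}) \<times> UNIV"
  have "(y, x) \<notin> ?H\<^sup>*"
  proof
    assume "(y, x) \<in> ?H\<^sup>*"
    moreover have "y \<noteq> x" using assms(2,3) by blast
    ultimately obtain z where "(y, z) \<in> ?H" by (auto elim: converse_rtranclE)
    then show False using assms(3) by blast
  qed
  then show "acyclic H'" using acyclic_subset[OF assms(1)] unfolding H'_def by simp
  have "H\<^sup>* `` {u} \<subseteq> H'\<^sup>* `` {u}"
  proof
    fix w assume "w \<in> H\<^sup>* `` {u}"
    then have "(u, w) \<in> ?H\<^sup>*" by (simp add: rtrancl_restrict_reachable)
    moreover have "?H \<subseteq> H'" unfolding H'_def by blast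
    ultimately show "w \<in> H'\<^sup>* `` {u}" using rtrancl_mono by blast
  qed
  moreover have "(x, y) \<in> H'" unfolding H'_def by simp
  ultimately show "insert y (H\<^sup>* `` {u}) \<subseteq> H'\<^sup>* `` {u}"
    using assms(2) by (blast intro: rtrancl_into_rtrancl)
qed

lemma acyclic_subset_reaching_all:
  assumes "finite V" "A \<subseteq> V \<times> V" "u \<in> V" "\<forall>v\<in>V. (u, v) \<in> A\<^sup>*"
  shows "\<exists>H\<subseteq>A. acyclic H \<and> (\<forall>v\<in>V. (u, v) \<in> H\<^sup>*)"
proof -
  have reach_subset: "H\<^sup>* `` {u} \<subseteq> V" if "H \<subseteq> A" for H
  proof
    fix v assume "v \<in> H\<^sup>* `` {u}"
    then have "v = u \<or> (u, v) \<in> H\<^sup>+" by (auto simp: rtrancl_eq_or_trancl)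
    then show "v \<in> V" using that assms(2,3) by (fastforce dest: tranclD2)
  qed
  have "card (H\<^sup>* `` {u}) < Suc (card V)" if "H \<subseteq> A" for H
    using card_mono[OF assms(1) reach_subset[OF that]] by simp
  then have "\<exists>H. (H \<subseteq> A \<and> acyclic H) \<and>
      (\<forall>H'. H' \<subseteq> A \<and> acyclic H' \<longrightarrow> card (H'\<^sup>* `` {u}) \<le> card (H\<^sup>* `` {u}))"
    by (intro ex_has_greatest_nat[where k = "{}" and b = "Suc (card V)"]) (auto simp: acyclic_def)
  then obtain H where H: "H \<subseteq> A" "acyclic H"
    and most: "\<And>H'. H' \<subseteq> A \<Longrightarrow> acyclic H' \<Longrightarrow> card (H'\<^sup>* `` {u}) \<le> card (H\<^sup>* `` {u})"
    by blast
  have "(u, v) \<in> H\<^sup>*" if "v \<in> V" for v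
  proof (rule ccontr)
    let ?R = "H\<^sup>* `` {u}"
    assume "(u, v) \<notin> H\<^sup>*"
    moreover have "(u, v) \<in> A\<^sup>*" using assms(4) that by blast
    ultimately obtain x y where xy: "(x, y) \<in> A" "x \<in> ?R" "y \<notin> ?R"
      using exists_arc_leaving[of u v A ?R] by blast
    then have reach_xy: "(u, x) \<in> H\<^sup>*" "(u, y) \<notin> H\<^sup>*" by auto
    define H' where "H' = insert (x, y) (H \<inter> ?R \<times> UNIV)"
    have H'A: "H' \<subseteq> A" using H(1) xy(1) unfolding H'_def by blast
    have "insert y ?R \<subseteq> H'\<^sup>* `` {u}"
      using acyclic_extension_reaching_more(2)[OF H(2) reach_xy] unfolding H'_def .
    then have "card (insert y ?R) \<le> card (H'\<^sup>* `` {u})"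
      by (rule card_mono[OF finite_subset[OF reach_subset[OF H'A] assms(1)]])
    also have "\<dots> \<le> card ?R"
      using most[OF H'A] acyclic_extension_reaching_more(1)[OF H(2) reach_xy] unfolding H'_def .
    finally show False
      using xy(3) finite_subset[OF reach_subset[OF H(1)] assms(1)] by simp
  qed
  with H show ?thesis by blast
qed

lemma maximal_acyclic_extension:
  assumes "finite A" "H\<^sub>0 \<subseteq> A" "acyclic H\<^sub>0"
  shows "\<exists>H. H\<^sub>0 \<subseteq> H \<and> H \<subseteq> A \<and> acyclic H \<and> (\<forall>(x, y)\<in>A - H. (y, x) \<in> H\<^sup>*)"
proof -
  obtain H where H: "H \<in> {H. H \<subseteq> A \<and> acyclic H}" "H\<^sub>0 \<subseteq> H"
    and max: "\<forall>H'\<in>{H. H \<subseteq> A \<and> acyclic H}. H \<subseteq> H' \<longrightarrow> H = H'"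
    using finite_has_maximal2[of "{H. H \<subseteq> A \<and> acyclic H}" H\<^sub>0] assms by auto
  have "(y, x) \<in> H\<^sup>*" if "(x, y) \<in> A - H" for x y
    using max[rule_format, of "insert (x, y) H"] H(1) that by auto
  with H show ?thesis by auto
qed

lemma strongly_connected_not_acyclic:
  assumes "strongly_connected V A" "a \<in> V" "b \<in> V" "a \<noteq> b"
  shows "\<not> acyclic A"
proof -
  have "(a, b) \<in> A\<^sup>+" "(b, a) \<in> A\<^sup>*"
    using assms by (auto simp: strongly_connected_def rtrancl_eq_or_trancl)
  then have "(a, a) \<in> A\<^sup>+" by (rule trancl_rtrancl_trancl)
  then show ?thesis by (auto simp: acyclic_def)
qed

lemma dcycle_if_not_acyclic:
  assumes "digraph V A" "\<not> acyclic A"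
  shows "\<exists>c. dcycle V A c"
proof -
  have arcs: "A \<subseteq> V \<times> V" and "finite A"
    using assms(1) finite_subset[of A "V \<times> V"] by (auto simp: digraph_def)
  then obtain H where H: "H \<subseteq> A" "acyclic H" and closes: "\<forall>(x, y)\<in>A - H. (y, x) \<in> H\<^sup>*"
    using maximal_acyclic_extension[of A "{}"] by (auto simp: acyclic_def)
  have "\<not> A \<subseteq> H" using assms(2) acyclic_subset[OF H(2)] by auto
  then obtain x y where xy: "(x, y) \<in> A" "(x, y) \<notin> H" by auto
  then have "(y, x) \<in> H\<^sup>*" using closes by auto
  then obtain q where "q \<in> walks H y x" using walks_nonempty_if_rtrancl[of y x H] by blast
  moreover have "x \<noteq> y" using xy(1) assms(1) by (auto simp: digraph_def)
  ultimately show ?thesis using dcycle_if_walk[OF arcs H xy(1)] by blast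
qed

lemma maximal_acyclic_subset_reaching_all:
  assumes "digraph V A" "strongly_connected V A" "u \<in> V"
  shows "\<exists>H\<subseteq>A. acyclic H \<and> (\<forall>v\<in>V. (u, v) \<in> H\<^sup>*) \<and> (\<forall>(x, y)\<in>A - H. (y, x) \<in> H\<^sup>*)"
proof -
  have finite_V: "finite V" and arcs: "A \<subseteq> V \<times> V" and "finite A"
    using assms(1) finite_subset[of A "V \<times> V"] by (auto simp: digraph_def)
  obtain H\<^sub>0 where H\<^sub>0: "H\<^sub>0 \<subseteq> A" "acyclic H\<^sub>0" and spans: "\<forall>v\<in>V. (u, v) \<in> H\<^sub>0\<^sup>*"
    using acyclic_subset_reaching_all[OF finite_V arcs assms(3)] assms(2,3)
    by (auto simp: strongly_connected_def)
  obtain H where "H\<^sub>0 \<subseteq> H" and H: "H \<subseteq> A" "acyclic H"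
    and closes: "\<forall>(x, y)\<in>A - H. (y, x) \<in> H\<^sup>*"
    using maximal_acyclic_extension[OF \<open>finite A\<close> H\<^sub>0] by blast
  moreover have "\<forall>v\<in>V. (u, v) \<in> H\<^sup>*" using spans rtrancl_mono[OF \<open>H\<^sub>0 \<subseteq> H\<close>] by blast
  ultimately show ?thesis by blast
qed

lemma finite_dpaths:
  assumes "finite V" shows "finite {p. dpath V A p}"
proof -
  have "{p. dpath V A p} \<subseteq> {xs. set xs \<subseteq> V \<and> length xs \<le> card V}"
    using assms by (auto simp: dpath_def dest!: distinct_card[symmetric] intro: card_mono)
  then show ?thesis using finite_lists_length_le[OF assms] finite_subset by blast
qed

lemma longest_path_from_ge:
  assumes "finite V" "dpath V A p" "hd p = u"
  shows "length p - 1 \<le> longest_path_from V A u"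
proof -
  have "{length p - 1 |p. dpath V A p \<and> hd p = u} \<subseteq> (\<lambda>p. length p - 1) ` {p. dpath V A p}"
    by auto
  then have "finite {length p - 1 |p. dpath V A p \<and> hd p = u}"
    using finite_dpaths[OF assms(1)] finite_subset by blast
  then show ?thesis unfolding longest_path_from_def using assms(2,3) by (intro Max_ge) auto
qed

lemma girth_le: "dcycle V A c \<Longrightarrow> girth V A \<le> length c"
  unfolding girth_def by (intro Least_le) auto

lemma girth_ge_2:
  assumes "dcycle V A c" shows "girth V A \<ge> 2"
proof -
  have "\<exists>c. dcycle V A c \<and> length c = girth V A"
    unfolding girth_def by (rule LeastI[of _ "length c"]) (use assms in blast)
  then show ?thesis by (auto simp: dcycle_def)
qed

subsection \<open>Heights along an acyclic set of arcs\<close>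

definition height :: "('a \<times> 'a) set \<Rightarrow> 'a \<Rightarrow> 'a \<Rightarrow> nat" where
  "height H u v = Max ((\<lambda>p. length p - 1) ` walks H u v)"

context
  fixes V :: "'a set" and A H :: "('a \<times> 'a) set" and u :: 'a
  assumes finite_V: "finite V" and arcs: "A \<subseteq> V \<times> V" and sub: "H \<subseteq> A"
    and acyc: "acyclic H" and root: "u \<in> V"
begin

lemma finite_walks: "finite (walks H u v)"
  using dpath_if_walk[OF arcs sub acyc root] finite_subset[OF _ finite_dpaths[OF finite_V]]
  by (metis mem_Collect_eq subsetI)

lemma height_ge: "p \<in> walks H u v \<Longrightarrow> length p - 1 \<le> height H u v"
  unfolding height_def using finite_walks by (intro Max_ge) auto

lemma height_attained:
  assumes "(u, v) \<in> H\<^sup>*" obtains p where "p \<in> walks H u v" "length p - 1 = height H u v"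
proof -
  have "height H u v \<in> (\<lambda>p. length p - 1) ` walks H u v"
    unfolding height_def using finite_walks walks_nonempty_if_rtrancl[OF assms] by (intro Max_in) auto
  with that show ?thesis by auto
qed

lemma height_le_longest_path_from:
  assumes "(u, v) \<in> H\<^sup>*" shows "height H u v \<le> longest_path_from V A u"
proof -
  obtain p where p: "p \<in> walks H u v" "length p - 1 = height H u v"
    using height_attained[OF assms] .
  have "hd p = u" using p(1) by (simp add: walks_def)
  then show ?thesis
    using longest_path_from_ge[OF finite_V dpath_if_walk[OF arcs sub acyc root p(1)]] p(2) by simp
qed

lemma height_add_girth_le:
  assumes "(x, y) \<in> A" "x \<noteq> y" "(u, y) \<in> H\<^sup>*" "(y, x) \<in> H\<^sup>*"
  shows "height H u y + (girth V A - 1) \<le> height H u x"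
proof -
  obtain p where p: "p \<in> walks H u y" "length p - 1 = height H u y"
    using height_attained[OF assms(3)] .
  obtain q where q: "q \<in> walks H y x" using walks_nonempty_if_rtrancl[OF assms(4)] by blast
  have "girth V A \<le> length q" using girth_le dcycle_if_walk[OF arcs sub acyc assms(1,2) q] .
  moreover have "length (p @ tl q) - 1 \<le> height H u x" using height_ge walks_append[OF p(1) q] .
  moreover have "length p > 0" "length q > 0" using p(1) q by (auto simp: walks_def)
  moreover have "length (p @ tl q) = length p + length q - 1" using q by (cases q) (auto simp: walks_def)
  ultimately show ?thesis using p(2) by linarith
qed

end

subsection \<open>Colouring by levels\<close>

lemma acyclic_coloring_by_levels:
  assumes "acyclic H" "0 < d" "\<forall>v\<in>V. f v \<le> l"
    and "\<forall>(x, y)\<in>A - H. f y + d \<le> f x"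
  shows "acyclic_coloring V A (l div d + 1) (\<lambda>v. f v div d)"
  unfolding acyclic_coloring_def
proof (intro conjI allI ballI notI)
  fix v assume "v \<in> V"
  then show "f v div d < l div d + 1" using assms(3) div_le_mono by (simp add: le_imp_less_Suc)
next
  fix i
  let ?C = "{v. f v div d = i}"
  assume "\<exists>c. dcycle (V \<inter> ?C) (A \<inter> ?C \<times> ?C) c"
  then obtain c where c: "dcycle (V \<inter> ?C) (A \<inter> ?C \<times> ?C) c" by blast
  have in_H: "(x, y) \<in> H" if "(x, y) \<in> A \<inter> ?C \<times> ?C" for x y
  proof (rule ccontr)
    assume "(x, y) \<notin> H"
    then have "f y + d \<le> f x" using assms(4) that by auto
    then have "(f y + d) div d \<le> f x div d" by (rule div_le_mono)
    then show False using that assms(2) by simp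
  qed
  have "c \<noteq> []" using c by (simp add: dcycle_def dpath_def)
  moreover have "successively (\<lambda>x y. (x, y) \<in> H) c" "(last c, hd c) \<in> H"
    using c in_H by (auto simp: dcycle_def dpath_def successively_conv_nth)
  ultimately have "successively (\<lambda>x y. (x, y) \<in> H) (c @ [hd c])"
    by (auto simp: successively_append_iff)
  then show False
    using distinct_if_successively_acyclic[OF assms(1)] \<open>c \<noteq> []\<close> by fastforce
qed

lemma dichromatic_number_le: "acyclic_coloring V A k col \<Longrightarrow> dichromatic_number V A \<le> k"
  unfolding dichromatic_number_def by (rule Least_le) blast

lemma div_add_one_le_ceiling:
  assumes "0 < d" shows "int (l div d + 1) \<le> \<lceil>real (l + 1) / real d\<rceil>"
proof -
  have "real (l div d) * real d < real (l + 1)"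
    using div_times_less_eq_dividend[of l d] by (metis of_nat_less_iff of_nat_mult less_Suc_eq_le Suc_eq_plus1)
  then have "real (l div d) < real (l + 1) / real d" using assms by (simp add: less_divide_eq)
  then show ?thesis by (simp add: le_ceiling_iff)
qed

theorem mainTheorem16:
  fixes V :: "'a set" and A :: "('a \<times> 'a) set"
  assumes "digraph V A"
    and "strongly_connected V A"
    and "card V \<ge> 2"
  shows "int (dichromatic_number V A)
           \<le> \<lceil>real ((MIN u\<in>V. longest_path_from V A u) + 1) / real (girth V A - 1)\<rceil>"
proof -
  have finite_V: "finite V" and arcs: "A \<subseteq> V \<times> V" and loopless: "\<And>v. (v, v) \<notin> A"
    using assms(1) by (auto simp: digraph_def)
  obtain a b where ab: "a \<in> V" "b \<in> V" "a \<noteq> b"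
    using assms(3) card_le_Suc0_iff_eq[OF finite_V] by fastforce
  define l where "l = (MIN u\<in>V. longest_path_from V A u)"
  have "l \<in> longest_path_from V A ` V" unfolding l_def using finite_V ab(1) by (intro Min_in) auto
  then obtain u where root: "u \<in> V" and lu: "longest_path_from V A u = l" by blast
  obtain H where H: "H \<subseteq> A" "acyclic H" and reach: "\<forall>v\<in>V. (u, v) \<in> H\<^sup>*"
    and closes: "\<forall>(x, y)\<in>A - H. (y, x) \<in> H\<^sup>*"
    using maximal_acyclic_subset_reaching_all[OF assms(1,2) root] by blast
  define d where "d = girth V A - 1"
  have "0 < d"
    using dcycle_if_not_acyclic[OF assms(1) strongly_connected_not_acyclic[OF assms(2) ab]]
      girth_ge_2 unfolding d_def by fastforce
  moreover have "\<forall>v\<in>V. height H u v \<le> l"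
    using height_le_longest_path_from[OF finite_V arcs H root] reach lu by blast
  moreover have "\<forall>(x, y)\<in>A - H. height H u y + d \<le> height H u x"
  proof (intro ballI, clarify)
    fix x y assume "(x, y) \<in> A" "(x, y) \<notin> H"
    moreover from this have "y \<in> V" "x \<noteq> y" using arcs loopless by auto
    ultimately show "height H u y + d \<le> height H u x"
      unfolding d_def using height_add_girth_le[OF finite_V arcs H root] closes reach by blast
  qed
  ultimately have "dichromatic_number V A \<le> l div d + 1"
    using dichromatic_number_le acyclic_coloring_by_levels[OF H(2)] by blast
  then show ?thesis
    using div_add_one_le_ceiling[OF \<open>0 < d\<close>, of l] unfolding l_def d_def by linarith
qed

end
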